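(* Let $X$ be a sofic shift and $\varphi$ a flip for $(X,\sigma_X)$. Then there are a finite set $\mathcal{A}$, a map $\mathcal{L}:\mathcal{A}\to\mathcal{B}_1(X)$ and zero-one $\mathcal{A}\times\mathcal{A}$ matrices $A$ and $J$ with the following properties: (1) $\mathcal{L}_\infty:X_A\to X$ is a factoring; (2) $\mathcal{L}_\infty$ has no graph diamonds; (3) $JA=A^\top J$ and $J^2=I$; (4) $\mathcal{L}_\infty\circ\varphi_{J,A}=\varphi\circ\mathcal{L}_\infty$; (5) if $\delta\in\{0,1\}$, $x\in X$ and $\sigma_X^\delta\varphi(x)=x$, then there is $y\in X_A$ with $\mathcal{L}_\infty(y)=x$ and $\sigma_A^\delta\varphi_{J,A}(y)=y$.
   Context: For a shift space $X$, $\sigma_X$ is the shift map and $\mathcal{B}_1(X)$ is the set of symbols occurring in points of $X$. A flip for $(X,\sigma_X)$ is a homeomorphism $\varphi:X\to X$ with $\varphi\sigma_X=\sigma_X^{-1}\varphi$ and $\varphi^2=\mathrm{id}_X$. For a zero-one $\mathcal{A}\times\mathcal{A}$ matrix $A$, $X_A=\{y\in\mathcal{A}^{\mathbb{Z}}:A(y_i,y_{i+1})=1\ \forall i\in\mathbb{Z}\}$ and $\sigma_A$ is the shift map on $X_A$. $\mathcal{L}_\infty$ is the one-block code $\mathcal{L}_\infty(y)_i=\mathcal{L}(y_i)$; it is a factoring onto $X$ if $\mathcal{L}_\infty(X_A)=X$. $\mathcal{L}_\infty$ has no graph diamonds if there are no two distinct words $a_0\cdots a_n\neq b_0\cdots b_n$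 ($n\ge1$) with $A(a_i,a_{i+1})=A(b_i,b_{i+1})=1$ for all $i<n$, $a_0=b_0$, $a_n=b_n$ and $\mathcal{L}(a_i)=\mathcal{L}(b_i)$ for all $i$. If $J$ is a zero-one matrix with $J^2=I$, it is a symmetric permutation matrix, and $\tau:\mathcal{A}\to\mathcal{A}$ denotes the map with $J(a,\tau(a))=1$; if moreover $JA=A^\top J$, then $\varphi_{J,A}:X_A\to X_A$, $\varphi_{J,A}(y)_i=\tau(y_{-i})$, is a flip for $(X_A,\sigma_A)$. *)

theory Defs
  imports "HOL-Analysis.Analysis"
begin

definition shift_top :: "(int \<Rightarrow> 'b) topology" where
  "shift_top = product_topology (\<lambda>_. discrete_topology UNIV) UNIV"

definition shift :: "(int \<Rightarrow> 'b) \<Rightarrow> (int \<Rightarrow> 'b)" where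
  "shift x = (\<lambda>i. x (i + 1))"

definition shift_inv :: "(int \<Rightarrow> 'b) \<Rightarrow> (int \<Rightarrow> 'b)" where
  "shift_inv x = (\<lambda>i. x (i - 1))"

text \<open>Sofic shift (Lind--Marcus): the set of label sequences of bi-infinite walks
  in a finite edge-labelled graph (edges E, initial/terminal vertex maps, labelling).\<close>
definition sofic :: "(int \<Rightarrow> 'b) set \<Rightarrow> bool" where
  "sofic X \<longleftrightarrow> (\<exists>(E::nat set) (ini::nat \<Rightarrow> nat) (ter::nat \<Rightarrow> nat) (lab::nat \<Rightarrow> 'b).
      finite E \<and>
      X = {(\<lambda>i. lab (p i)) | p. \<forall>i. p i \<in> E \<and> ter (p i) = ini (p (i + 1))})"

definition B1 :: "(int \<Rightarrow> 'b) set \<Rightarrow> 'b set" where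
  "B1 X = {x i | x i. x \<in> X}"

definition is_flip :: "(int \<Rightarrow> 'b) set \<Rightarrow> ((int \<Rightarrow> 'b) \<Rightarrow> (int \<Rightarrow> 'b)) \<Rightarrow> bool" where
  "is_flip X \<phi> \<longleftrightarrow>
     homeomorphic_map (subtopology shift_top X) (subtopology shift_top X) \<phi> \<and>
     (\<forall>x\<in>X. \<phi> (shift x) = shift_inv (\<phi> x)) \<and>
     (\<forall>x\<in>X. \<phi> (\<phi> x) = x)"

definition zero_one_mat :: "nat set \<Rightarrow> (nat \<Rightarrow> nat \<Rightarrow> nat) \<Rightarrow> bool" where
  "zero_one_mat S M \<longleftrightarrow> (\<forall>a\<in>S. \<forall>b\<in>S. M a b \<in> {0, 1})"

definition mat_mult :: "nat set \<Rightarrow> (nat \<Rightarrow> nat \<Rightarrow> nat) \<Rightarrow> (nat \<Rightarrow> nat \<Rightarrow> nat) \<Rightarrow> nat \<Rightarrow> nat \<Rightarrow> nat" where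
  "mat_mult S M N = (\<lambda>a c. \<Sum>b\<in>S. M a b * N b c)"

definition mat_transpose :: "(nat \<Rightarrow> nat \<Rightarrow> nat) \<Rightarrow> nat \<Rightarrow> nat \<Rightarrow> nat" where
  "mat_transpose M = (\<lambda>a b. M b a)"

definition mat_id :: "nat \<Rightarrow> nat \<Rightarrow> nat" where
  "mat_id = (\<lambda>a b. if a = b then 1 else 0)"

definition mat_eq :: "nat set \<Rightarrow> (nat \<Rightarrow> nat \<Rightarrow> nat) \<Rightarrow> (nat \<Rightarrow> nat \<Rightarrow> nat) \<Rightarrow> bool" where
  "mat_eq S M N \<longleftrightarrow> (\<forall>a\<in>S. \<forall>b\<in>S. M a b = N a b)"

definition XA :: "nat set \<Rightarrow> (nat \<Rightarrow> nat \<Rightarrow> nat) \<Rightarrow> (int \<Rightarrow> nat) set" where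
  "XA S A = {y. \<forall>i. y i \<in> S \<and> A (y i) (y (i + 1)) = 1}"

definition L_inf :: "(nat \<Rightarrow> 'b) \<Rightarrow> (int \<Rightarrow> nat) \<Rightarrow> (int \<Rightarrow> 'b)" where
  "L_inf L y = (\<lambda>i. L (y i))"

text \<open>tau a is the unique b with J(a,b) = 1 (J a symmetric permutation matrix).\<close>
definition tau :: "nat set \<Rightarrow> (nat \<Rightarrow> nat \<Rightarrow> nat) \<Rightarrow> nat \<Rightarrow> nat" where
  "tau S J a = (THE b. b \<in> S \<and> J a b = 1)"

definition phiJA :: "nat set \<Rightarrow> (nat \<Rightarrow> nat \<Rightarrow> nat) \<Rightarrow> (int \<Rightarrow> nat) \<Rightarrow> (int \<Rightarrow> nat)" where
  "phiJA S J y = (\<lambda>i. tau S J (y (- i)))"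

definition no_graph_diamonds :: "nat set \<Rightarrow> (nat \<Rightarrow> nat \<Rightarrow> nat) \<Rightarrow> (nat \<Rightarrow> 'b) \<Rightarrow> bool" where
  "no_graph_diamonds S A L \<longleftrightarrow>
     \<not> (\<exists>n\<ge>1. \<exists>as bs. length as = n + 1 \<and> length bs = n + 1 \<and> as \<noteq> bs \<and>
           set as \<subseteq> S \<and> set bs \<subseteq> S \<and>
           (\<forall>i<n. A (as ! i) (as ! (i + 1)) = 1 \<and> A (bs ! i) (bs ! (i + 1)) = 1) \<and>
           as ! 0 = bs ! 0 \<and> as ! n = bs ! n \<and>
           (\<forall>i\<le>n. L (as ! i) = L (bs ! i)))"

end

theory Submission
  imports Defs
begin

text \<open>A sofic shift \<open>X\<close> is the label image of the bi-infinite walks in a finite labelled graph,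
  and by compactness the flip \<open>\<phi>\<close> reads \<open>\<phi> x\<close> at \<open>0\<close> off a window \<open>[-N, N]\<close> of \<open>x\<close>.
  The new graph has as vertices the states of points \<open>x \<in> X\<close> at times \<open>j\<close>: the window of \<open>x\<close>
  around \<open>j\<close>, the window of \<open>\<phi> x\<close> around \<open>-j\<close>, and the sets of old vertices where a walk
  reading \<open>x\<close> before \<open>j\<close> can end or a walk reading \<open>x\<close> from \<open>j\<close> on can start (and the same
  two sets for \<open>\<phi> x\<close> at \<open>-j\<close>); its edges join consecutive states of the same point.
  Swapping the \<open>x\<close>-part and the \<open>\<phi> x\<close>-part of a state reverses edges, which gives \<open>J\<close>.
  The windows let one read \<open>\<phi>\<close> off any walk of states, the vertex sets let every walk of states
  be lifted back to the old graph, and along two walks with the same labels and end points every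
  component of the state propagates deterministically, so there are no graph diamonds.
  A point with \<open>\<sigma>\<^sup>\<delta> \<phi> x = x\<close> lifts to its own sequence of states.\<close>

section \<open>Sliding block codes on compact shift spaces\<close>

lemma openin_shift_top_cylinder:
  assumes "openin shift_top U" "x \<in> U"
  obtains K where "finite K" "\<And>z. (\<forall>i\<in>K. z i = x i) \<Longrightarrow> z \<in> U"
proof -
  obtain V where V: "finite {i. V i \<noteq> UNIV}" "x \<in> PiE UNIV V" "PiE UNIV V \<subseteq> U"
    using assms unfolding shift_top_def openin_product_topology_alt by auto
  show thesis
  proof (rule that[OF V(1)])
    fix z assume "\<forall>i\<in>{i. V i \<noteq> UNIV}. z i = x i"
    then have "z i \<in> V i" for i using V(2) by (cases "V i = UNIV") (auto simp: PiE_iff)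
    then have "z \<in> PiE UNIV V" by (simp add: PiE_iff)
    then show "z \<in> U" using V(3) by blast
  qed
qed

lemma openin_shift_top_cylinder_set:
  assumes "finite K"
  shows "openin shift_top {z. \<forall>i\<in>K. z i = x i}"
proof -
  let ?V = "\<lambda>i. if i \<in> K then {x i} else UNIV"
  have "{z. \<forall>i\<in>K. z i = x i} = PiE UNIV ?V"
    by (auto simp: PiE_iff) (metis singletonD)
  moreover have "finite {i. ?V i \<noteq> UNIV}"
    using assms by (rule finite_subset[rotated]) auto
  then have "openin shift_top (PiE UNIV ?V)"
    unfolding shift_top_def openin_PiE_gen by simp
  ultimately show ?thesis by simp
qed

lemma continuous_map_discrete_cylinder:
  assumes "continuous_map (subtopology shift_top X) (discrete_topology UNIV) f" "x \<in> X"
  shows "\<exists>K. finite K \<and> (\<forall>z\<in>X. (\<forall>i\<in>K. z i = x i) \<longrightarrow> f z = f x)"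
proof -
  have "openin (subtopology shift_top X) {z \<in> X. f z = f x}"
    using assms(1) unfolding continuous_map_def
    by (auto simp: shift_top_def dest: spec[of _ "{f x}"])
  then obtain U where U: "openin shift_top U" "{z \<in> X. f z = f x} = U \<inter> X"
    by (auto simp: openin_subtopology)
  have "x \<in> U" using U(2) assms(2) by blast
  then obtain K where "finite K" "\<And>z. (\<forall>i\<in>K. z i = x i) \<Longrightarrow> z \<in> U"
    using openin_shift_top_cylinder[OF U(1)] by metis
  then show ?thesis using U(2) by blast
qed

lemma finite_int_abs_bound: "finite (K :: int set) \<Longrightarrow> \<exists>N::nat. \<forall>i\<in>K. \<bar>i\<bar> \<le> int N"
proof
  assume K: "finite K"
  show "\<forall>i\<in>K. \<bar>i\<bar> \<le> int (nat (Max (insert 0 (abs ` K))))"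
  proof
    fix i assume "i \<in> K"
    then have "\<bar>i\<bar> \<le> Max (insert 0 (abs ` K))" using K by (intro Max_ge) auto
    then show "\<bar>i\<bar> \<le> int (nat (Max (insert 0 (abs ` K))))" by linarith
  qed
qed

text \<open>Compactness turns the cylinder neighbourhoods given by local constancy into finitely many.\<close>
lemma continuous_map_discrete_window:
  assumes "compactin shift_top X"
    and "continuous_map (subtopology shift_top X) (discrete_topology UNIV) f"
  shows "\<exists>N::nat. \<forall>x\<in>X. \<forall>z\<in>X. (\<forall>t. \<bar>t\<bar> \<le> int N \<longrightarrow> x t = z t) \<longrightarrow> f x = f z"
proof -
  have "\<forall>x\<in>X. \<exists>K. finite K \<and> (\<forall>z\<in>X. (\<forall>i\<in>K. z i = x i) \<longrightarrow> f z = f x)"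
    using continuous_map_discrete_cylinder[OF assms(2)] by blast
  then obtain K where "\<forall>x\<in>X. finite (K x) \<and> (\<forall>z\<in>X. (\<forall>i\<in>K x. z i = x i) \<longrightarrow> f z = f x)"
    by (rule bchoice[elim_format]) blast
  then have K: "\<And>x. x \<in> X \<Longrightarrow> finite (K x)"
    "\<And>x z. x \<in> X \<Longrightarrow> z \<in> X \<Longrightarrow> \<forall>i\<in>K x. z i = x i \<Longrightarrow> f z = f x"
    by blast+
  let ?C = "\<lambda>x. {z. \<forall>i\<in>K x. z i = x i}"
  have "(\<forall>U\<in>?C ` X. openin shift_top U) \<and> X \<subseteq> \<Union>(?C ` X) \<longrightarrow>
      (\<exists>F. finite F \<and> F \<subseteq> ?C ` X \<and> X \<subseteq> \<Union>F)"
    using assms(1) unfolding compactin_def by (rule conjunct2[THEN spec])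
  moreover have "\<forall>U\<in>?C ` X. openin shift_top U"
    using openin_shift_top_cylinder_set K(1) by blast
  ultimately have "\<exists>F. finite F \<and> F \<subseteq> ?C ` X \<and> X \<subseteq> \<Union>F"
    by blast
  then obtain F where F: "finite F" "F \<subseteq> ?C ` X" "X \<subseteq> \<Union>F"
    by blast
  then obtain Y where Y: "finite Y" "Y \<subseteq> X" "F = ?C ` Y"
    using finite_subset_image[OF F(1,2)] by blast
  have "finite (\<Union>y\<in>Y. K y)"
    using Y(1) by (rule finite_UN_I) (use Y(2) K(1) in blast)
  then obtain N :: nat where "\<forall>i\<in>(\<Union>y\<in>Y. K y). \<bar>i\<bar> \<le> int N"
    using finite_int_abs_bound by blast
  then have N: "\<bar>i\<bar> \<le> int N" if "y \<in> Y" "i \<in> K y" for y i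
    using that by blast
  show ?thesis
  proof (intro exI ballI impI)
    fix x z assume x: "x \<in> X" and z: "z \<in> X" and agree: "\<forall>t. \<bar>t\<bar> \<le> int N \<longrightarrow> x t = z t"
    obtain y where y: "y \<in> Y" "x \<in> ?C y" using F(3) Y(3) x by blast
    have yX: "y \<in> X" using y(1) Y(2) by blast
    have "\<forall>i\<in>K y. z i = y i"
    proof
      fix i assume i: "i \<in> K y"
      then have "z i = x i" using agree N[OF y(1) i] by simp
      then show "z i = y i" using y(2) i by simp
    qed
    then have "f z = f y" using K(2)[OF yX z] by blast
    moreover have "f x = f y" using K(2)[OF yX x] y(2) by blast
    ultimately show "f x = f z" by simp
  qed
qed

lemma continuous_map_coordinate_window:
  assumes "compactin shift_top X"
    and "continuous_map (subtopology shift_top X) shift_top \<phi>"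
  shows "\<exists>N::nat. \<forall>x\<in>X. \<forall>z\<in>X. (\<forall>t. \<bar>t\<bar> \<le> int N \<longrightarrow> x t = z t) \<longrightarrow> \<phi> x 0 = \<phi> z 0"
proof -
  have "continuous_map shift_top (discrete_topology UNIV) (\<lambda>x. x 0)"
    unfolding shift_top_def by (rule continuous_map_product_projection) simp
  then have "continuous_map (subtopology shift_top X) (discrete_topology UNIV) (\<lambda>x. \<phi> x 0)"
    using continuous_map_compose[OF assms(2)] by (simp add: o_def)
  with assms(1) show ?thesis
    by (rule continuous_map_discrete_window)
qed

lemma closedin_walks:
  "closedin (product_topology (\<lambda>_. discrete_topology UNIV) UNIV)
     {p :: int \<Rightarrow> 'e. \<forall>i. p i \<in> E \<and> ter (p i) = ini (p (i + 1))}"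
  (is "closedin ?P ?W")
proof -
  have "openin ?P (topspace ?P - ?W)"
    unfolding openin_product_topology_alt
  proof
    fix p assume "p \<in> topspace ?P - ?W"
    then obtain i where i: "\<not> (p i \<in> E \<and> ter (p i) = ini (p (i + 1)))" by blast
    define U where "U k = (if k = i \<or> k = i + 1 then {p k} else UNIV)" for k
    have "{k. U k \<noteq> UNIV} \<subseteq> {i, i + 1}" by (auto simp: U_def)
    then have "finite {k. U k \<noteq> UNIV}" by (rule finite_subset) simp
    moreover have "p \<in> PiE UNIV U" by (simp add: U_def PiE_iff)
    moreover have "PiE UNIV U \<subseteq> topspace ?P - ?W"
    proof
      fix z assume "z \<in> PiE UNIV U"
      then have "z k \<in> U k" for k by (simp add: PiE_iff)
      from this[of i] this[of "i + 1"] have "z i = p i" "z (i + 1) = p (i + 1)"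
        by (simp_all add: U_def)
      moreover have "z i \<in> E \<and> ter (z i) = ini (z (i + 1))" if "z \<in> ?W"
        using that by blast
      ultimately have "z \<notin> ?W" using i by auto
      then show "z \<in> topspace ?P - ?W" by simp
    qed
    ultimately show "\<exists>U. finite {i \<in> UNIV. U i \<noteq> topspace (discrete_topology UNIV)} \<and>
        (\<forall>i\<in>UNIV. openin (discrete_topology UNIV) (U i)) \<and> p \<in> PiE UNIV U \<and>
        PiE UNIV U \<subseteq> topspace ?P - ?W"
      by (intro exI[of _ U]) simp
  qed
  then show ?thesis by (simp add: closedin_def)
qed

lemma compactin_walk_labels:
  fixes E :: "'e set" and ini ter :: "'e \<Rightarrow> 'v" and lab :: "'e \<Rightarrow> 'b"
  assumes "finite E"
  shows "compactin shift_top {(\<lambda>i. lab (p i)) | p. \<forall>i. p i \<in> E \<and> ter (p i) = ini (p (i + 1))}"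
proof -
  let ?P = "product_topology (\<lambda>_::int. discrete_topology (UNIV::'e set)) UNIV"
  define W where "W = {p::int \<Rightarrow> 'e. \<forall>i. p i \<in> E \<and> ter (p i) = ini (p (i + 1))}"
  have "compactin ?P (PiE UNIV (\<lambda>_. E))"
    by (simp add: compactin_PiE compactin_discrete_topology assms)
  moreover have "W \<subseteq> PiE UNIV (\<lambda>_. E)" unfolding W_def by auto
  moreover have "closedin ?P W" unfolding W_def by (rule closedin_walks)
  ultimately have "compactin ?P W"
    by (rule closed_compactin)
  moreover have "continuous_map ?P shift_top (\<lambda>p i. lab (p i))"
    unfolding shift_top_def continuous_map_componentwise_UNIV
  proof
    fix k :: int
    have "continuous_map ?P (discrete_topology UNIV) (lab \<circ> (\<lambda>p. p k))"
      by (rule continuous_map_compose[OF continuous_map_product_projection]) simp_all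
    then show "continuous_map ?P (discrete_topology UNIV) (\<lambda>p. lab (p k))"
      by (simp add: o_def)
  qed
  ultimately have "compactin shift_top ((\<lambda>p i. lab (p i)) ` W)"
    by (rule image_compactin)
  then show ?thesis by (simp add: W_def image_Collect)
qed

section \<open>Bi-infinite chains and sliding windows\<close>

lemma biinfinite_chain:
  fixes C :: "int \<Rightarrow> 'v set" and R :: "int \<Rightarrow> 'v \<Rightarrow> 'v \<Rightarrow> bool"
  assumes fw: "\<And>i u. u \<in> C i \<Longrightarrow> \<exists>v\<in>C (i + 1). R i u v"
    and bw: "\<And>i v. v \<in> C (i + 1) \<Longrightarrow> \<exists>u\<in>C i. R i u v"
    and "C 0 \<noteq> {}"
  shows "\<exists>w. \<forall>i. w i \<in> C i \<and> R i (w i) (w (i + 1))"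
proof -
  define next_of where "next_of i u = (SOME v. v \<in> C (i + 1) \<and> R i u v)" for i u
  define prev_of where "prev_of i v = (SOME u. u \<in> C i \<and> R i u v)" for i v
  have next_of: "next_of i u \<in> C (i + 1) \<and> R i u (next_of i u)" if "u \<in> C i" for i u
    unfolding next_of_def using fw[OF that] by (rule someI2_bex) blast
  have prev_of: "prev_of i v \<in> C i \<and> R i (prev_of i v) v" if "v \<in> C (i + 1)" for i v
    unfolding prev_of_def using bw[OF that] by (rule someI2_bex) blast
  obtain v0 where v0: "v0 \<in> C 0" using assms(3) by blast
  define fwd where "fwd = rec_nat v0 (\<lambda>n u. next_of (int n) u)"
  define bwd where "bwd = rec_nat v0 (\<lambda>n v. prev_of (- int n - 1) v)"
  have fwd: "fwd n \<in> C (int n)" for n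
  proof (induction n)
    case (Suc n)
    then show ?case using next_of[OF Suc.IH] by (simp add: fwd_def algebra_simps)
  qed (simp add: fwd_def v0)
  have bwd: "bwd n \<in> C (- int n)" for n
  proof (induction n)
    case (Suc n)
    then have "bwd n \<in> C ((- int n - 1) + 1)" by simp
    from prev_of[OF this] have "bwd (Suc n) \<in> C (- int n - 1)" by (simp add: bwd_def)
    moreover have "- int (Suc n) = - int n - 1" by simp
    ultimately show ?case by (simp only:)
  qed (simp add: bwd_def v0)
  define w where "w i = (if 0 \<le> i then fwd (nat i) else bwd (nat (- i)))" for i
  have "w i \<in> C i \<and> R i (w i) (w (i + 1))" for i
  proof (cases "0 \<le> i")
    case True
    have "w (i + 1) = next_of i (w i)"
      using True by (simp add: w_def fwd_def nat_add_distrib)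
    then show ?thesis using True fwd[of "nat i"] next_of by (simp add: w_def)
  next
    case False
    define n where "n = nat (- i - 1)"
    have i: "i = - int n - 1" using False by (simp add: n_def)
    have "w (i + 1) = bwd n" "w i = prev_of i (bwd n)"
      using False by (simp_all add: w_def fwd_def bwd_def i nat_add_distrib)
    then show ?thesis using bwd[of n] prev_of[of "bwd n" i] by (simp add: i)
  qed
  then show ?thesis by blast
qed

lemma sliding_window_shift:
  fixes g :: "nat \<Rightarrow> int \<Rightarrow> 'x" and M :: int
  assumes rel: "\<And>k t. k < n \<Longrightarrow> \<bar>t\<bar> \<le> M \<Longrightarrow> \<bar>t + 1\<bar> \<le> M \<Longrightarrow> g (Suc k) t = g k (t + 1)"
  shows "k + d \<le> n \<Longrightarrow> \<bar>t\<bar> \<le> M \<Longrightarrow> \<bar>t - int d\<bar> \<le> M \<Longrightarrow> g (k + d) (t - int d) = g k t"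
proof (induction d)
  case 0 then show ?case by simp
next
  case (Suc d)
  have "g (k + Suc d) (t - int (Suc d)) = g (k + d) (t - int (Suc d) + 1)"
    using rel[of "k + d" "t - int (Suc d)"] Suc.prems by simp
  also have "\<dots> = g (k + d) (t - int d)" by simp
  also have "\<dots> = g k t" using Suc by simp
  finally show ?case .
qed

text \<open>Every
  entry \<open>g k t\<close> lies on a diagonal through a centre \<open>g k' 0\<close> or an end window \<open>g 0\<close>, \<open>g n\<close>.\<close>
lemma sliding_windows_eq:
  fixes g h :: "nat \<Rightarrow> int \<Rightarrow> 'x" and M :: int
  assumes relg: "\<And>k t. k < n \<Longrightarrow> \<bar>t\<bar> \<le> M \<Longrightarrow> \<bar>t + 1\<bar> \<le> M \<Longrightarrow> g (Suc k) t = g k (t + 1)"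
    and relh: "\<And>k t. k < n \<Longrightarrow> \<bar>t\<bar> \<le> M \<Longrightarrow> \<bar>t + 1\<bar> \<le> M \<Longrightarrow> h (Suc k) t = h k (t + 1)"
    and e0: "\<And>t. \<bar>t\<bar> \<le> M \<Longrightarrow> g 0 t = h 0 t"
    and en: "\<And>t. \<bar>t\<bar> \<le> M \<Longrightarrow> g n t = h n t"
    and ec: "\<And>k. k \<le> n \<Longrightarrow> g k 0 = h k 0"
    and k: "k \<le> n" and t: "\<bar>t\<bar> \<le> M"
  shows "g k t = h k t"
proof -
  note sg = sliding_window_shift[where n=n and g=g and M=M, OF relg]
  note sh = sliding_window_shift[where n=n and g=h and M=M, OF relh]
  consider "0 \<le> int k + t \<and> int k + t \<le> int n \<and> 0 \<le> t"
    | "0 \<le> int k + t \<and> int k + t \<le> int n \<and> t < 0" | "int k + t < 0" | "int k + t > int n"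
    by linarith
  then show ?thesis
  proof cases
    case 1
    define d where "d = nat t"
    have "g (k + d) (t - int d) = g k t" "h (k + d) (t - int d) = h k t"
      using sg[of k d t] sh[of k d t] 1 t k by (auto simp: d_def)
    moreover have "t - int d = 0" using 1 by (simp add: d_def)
    moreover have "k + d \<le> n" using 1 by (simp add: d_def) linarith
    ultimately show ?thesis using ec by metis
  next
    case 2
    define d where "d = nat (- t)"
    define k' where "k' = k - d"
    have kk: "k' + d = k" "0 - int d = t" using 2 by (auto simp: d_def k'_def)
    have "g (k' + d) (0 - int d) = g k' 0" "h (k' + d) (0 - int d) = h k' 0"
      using sg[of k' d 0] sh[of k' d 0] 2 t k kk by auto
    then show ?thesis using ec[of k'] kk k by (simp add: k'_def)
  next
    case 3
    have "g (0 + k) (t + int k - int k) = g 0 (t + int k)" "h (0 + k) (t + int k - int k) = h 0 (t + int k)"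
      using sg[of 0 k "t + int k"] sh[of 0 k "t + int k"] 3 t k by auto
    then show ?thesis using e0[of "t + int k"] 3 t by simp
  next
    case 4
    define d where "d = n - k"
    have "g (k + d) (t - int d) = g k t" "h (k + d) (t - int d) = h k t"
      using sg[of k d t] sh[of k d t] 4 t k by (auto simp: d_def)
    moreover have "k + d = n" using k by (simp add: d_def)
    moreover have "\<bar>t - int d\<bar> \<le> M" using 4 t k by (simp add: d_def)
    ultimately show ?thesis using en by metis
  qed
qed

lemma forward_recurrence_eq:
  assumes "f 0 = h 0"
    and "\<And>k. k < n \<Longrightarrow> f (Suc k) = F k (f k)" "\<And>k. k < n \<Longrightarrow> h (Suc k) = F k (h k)"
    and "k \<le> n"
  shows "f k = h k"
  using assms(4) by (induction k) (simp_all add: assms(1-3))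

lemma backward_recurrence_eq:
  assumes "f n = h n"
    and "\<And>k. k < n \<Longrightarrow> f k = G k (f (Suc k))" "\<And>k. k < n \<Longrightarrow> h k = G k (h (Suc k))"
    and "k \<le> n"
  shows "f k = h k"
  using assms(4) by (induction k rule: inc_induct) (simp_all add: assms(1-3))

definition bi_walk :: "'c set \<Rightarrow> ('c \<Rightarrow> 'c \<Rightarrow> bool) \<Rightarrow> (int \<Rightarrow> 'c) \<Rightarrow> bool" where
  "bi_walk T R y \<longleftrightarrow> (\<forall>i. y i \<in> T \<and> R (y i) (y (i + 1)))"

section \<open>Matrices of a finite graph with an edge-reversing involution\<close>

locale finite_flip_graph =
  fixes T :: "'c set" and R :: "'c \<Rightarrow> 'c \<Rightarrow> bool" and inv :: "'c \<Rightarrow> 'c" and lbl :: "'c \<Rightarrow> 'b"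
  assumes finite_T: "finite T"
    and inv_in: "\<And>a. a \<in> T \<Longrightarrow> inv a \<in> T"
    and inv_inv: "\<And>a. a \<in> T \<Longrightarrow> inv (inv a) = a"
    and R_inv: "\<And>a b. a \<in> T \<Longrightarrow> b \<in> T \<Longrightarrow> R a b \<Longrightarrow> R (inv b) (inv a)"
begin

definition enc :: "'c \<Rightarrow> nat" where
  "enc = (SOME f. inj_on f T)"

definition S :: "nat set" where
  "S = enc ` T"

definition dec :: "nat \<Rightarrow> 'c" where
  "dec = the_inv_into T enc"

definition adj_mat :: "nat \<Rightarrow> nat \<Rightarrow> nat" where
  "adj_mat s t = (if s \<in> S \<and> t \<in> S \<and> R (dec s) (dec t) then 1 else 0)"

definition inv_code :: "nat \<Rightarrow> nat" where
  "inv_code s = enc (inv (dec s))"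

definition flip_mat :: "nat \<Rightarrow> nat \<Rightarrow> nat" where
  "flip_mat s t = (if s \<in> S \<and> t \<in> S \<and> t = inv_code s then 1 else 0)"

definition lbl_code :: "nat \<Rightarrow> 'b" where
  "lbl_code s = lbl (dec s)"

lemma inj_on_enc: "inj_on enc T"
proof -
  have "\<exists>f::'c \<Rightarrow> nat. inj_on f T" using finite_imp_inj_to_nat_seg[OF finite_T] by blast
  then show ?thesis unfolding enc_def by (rule someI_ex)
qed

lemma finite_S: "finite S"
  unfolding S_def using finite_T by simp

lemma dec_enc [simp]: "a \<in> T \<Longrightarrow> dec (enc a) = a"
  unfolding dec_def by (rule the_inv_into_f_f[OF inj_on_enc])

lemma dec_in: "s \<in> S \<Longrightarrow> dec s \<in> T"
  unfolding S_def by auto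

lemma enc_in: "a \<in> T \<Longrightarrow> enc a \<in> S"
  unfolding S_def by simp

lemma enc_dec [simp]: "s \<in> S \<Longrightarrow> enc (dec s) = s"
  unfolding S_def by auto

lemma inv_code_in: "s \<in> S \<Longrightarrow> inv_code s \<in> S"
  unfolding inv_code_def by (simp add: enc_in inv_in dec_in)

lemma dec_inv_code: "s \<in> S \<Longrightarrow> dec (inv_code s) = inv (dec s)"
  unfolding inv_code_def by (simp add: inv_in dec_in)

lemma inv_code_inv_code: "s \<in> S \<Longrightarrow> inv_code (inv_code s) = s"
  by (simp add: inv_code_def dec_inv_code inv_in dec_in inv_inv)

lemma tau_flip_mat: "s \<in> S \<Longrightarrow> tau S flip_mat s = inv_code s"
  unfolding tau_def flip_mat_def by (rule the_equality) (auto simp: inv_code_in split: if_splits)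

lemma mat_mult_flip_mat_left: "s \<in> S \<Longrightarrow> mat_mult S flip_mat M s c = M (inv_code s) c"
proof -
  assume s: "s \<in> S"
  have "mat_mult S flip_mat M s c = (\<Sum>b\<in>S. if b = inv_code s then M b c else 0)"
    unfolding mat_mult_def by (rule sum.cong) (use s in \<open>auto simp: flip_mat_def\<close>)
  also have "\<dots> = M (inv_code s) c" using finite_S inv_code_in[OF s] by simp
  finally show ?thesis .
qed

lemma mat_mult_flip_mat_right: "c \<in> S \<Longrightarrow> mat_mult S M flip_mat a c = M a (inv_code c)"
proof -
  assume c: "c \<in> S"
  have "mat_mult S M flip_mat a c = (\<Sum>b\<in>S. if b = inv_code c then M a b else 0)"
    unfolding mat_mult_def
  proof (rule sum.cong)
    fix b assume b: "b \<in> S"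
    have "c = inv_code b \<longleftrightarrow> b = inv_code c" using inv_code_inv_code b c by auto
    then show "M a b * flip_mat b c = (if b = inv_code c then M a b else 0)"
      using b c by (auto simp: flip_mat_def)
  qed simp
  also have "\<dots> = M a (inv_code c)" using finite_S inv_code_in[OF c] by simp
  finally show ?thesis .
qed

lemma zero_one_adj_mat: "zero_one_mat S adj_mat"
  by (simp add: zero_one_mat_def adj_mat_def)

lemma zero_one_flip_mat: "zero_one_mat S flip_mat"
  by (simp add: zero_one_mat_def flip_mat_def)

lemma flip_mat_adj_mat: "mat_eq S (mat_mult S flip_mat adj_mat) (mat_mult S (mat_transpose adj_mat) flip_mat)"
  unfolding mat_eq_def
proof (intro ballI)
  fix a c assume a: "a \<in> S" and c: "c \<in> S"
  have "R (inv (dec a)) (dec c) \<longleftrightarrow> R (inv (dec c)) (dec a)"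
    using R_inv inv_in inv_inv dec_in a c by metis
  then have "adj_mat (inv_code a) c = adj_mat (inv_code c) a"
    using a c by (simp add: adj_mat_def inv_code_in dec_inv_code)
  then show "mat_mult S flip_mat adj_mat a c = mat_mult S (mat_transpose adj_mat) flip_mat a c"
    using mat_mult_flip_mat_left[OF a] mat_mult_flip_mat_right[OF c] by (simp add: mat_transpose_def)
qed

lemma flip_mat_square: "mat_eq S (mat_mult S flip_mat flip_mat) mat_id"
  unfolding mat_eq_def
proof (intro ballI)
  fix a c assume a: "a \<in> S" and c: "c \<in> S"
  have "c = inv_code (inv_code a) \<longleftrightarrow> c = a" using inv_code_inv_code a by simp
  then show "mat_mult S flip_mat flip_mat a c = mat_id a c"
    using mat_mult_flip_mat_left[OF a] a c inv_code_in by (auto simp: flip_mat_def mat_id_def)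
qed

lemma mem_XA_iff: "y \<in> XA S adj_mat \<longleftrightarrow> (\<forall>i. y i \<in> S) \<and> bi_walk T R (\<lambda>i. dec (y i))"
  unfolding XA_def bi_walk_def adj_mat_def by (auto simp: dec_in)

lemma enc_bi_walk_in_XA: "bi_walk T R y \<Longrightarrow> (\<lambda>i. enc (y i)) \<in> XA S adj_mat"
  unfolding mem_XA_iff by (simp add: bi_walk_def enc_in)

lemma phiJA_flip_mat: "y \<in> XA S adj_mat \<Longrightarrow> phiJA S flip_mat y = (\<lambda>i. inv_code (y (- i)))"
  unfolding phiJA_def by (simp add: mem_XA_iff tau_flip_mat)

lemma L_inf_image: "L_inf lbl_code ` XA S adj_mat = {(\<lambda>i. lbl (y i)) | y. bi_walk T R y}"
proof
  show "L_inf lbl_code ` XA S adj_mat \<subseteq> {(\<lambda>i. lbl (y i)) | y. bi_walk T R y}"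
    by (auto simp: mem_XA_iff L_inf_def lbl_code_def)
  show "{(\<lambda>i. lbl (y i)) | y. bi_walk T R y} \<subseteq> L_inf lbl_code ` XA S adj_mat"
  proof clarify
    fix y assume y: "bi_walk T R y"
    have "L_inf lbl_code (\<lambda>i. enc (y i)) = (\<lambda>i. lbl (y i))"
      using y by (simp add: L_inf_def lbl_code_def bi_walk_def)
    then show "(\<lambda>i. lbl (y i)) \<in> L_inf lbl_code ` XA S adj_mat"
      using enc_bi_walk_in_XA[OF y] by (metis image_eqI)
  qed
qed

lemma L_inf_enc: "bi_walk T R y \<Longrightarrow> L_inf lbl_code (\<lambda>i. enc (y i)) = (\<lambda>i. lbl (y i))"
  by (simp add: L_inf_def lbl_code_def bi_walk_def)

lemma no_graph_diamonds_code:
  assumes unique: "\<And>n as bs. \<forall>k\<le>n. as k \<in> T \<and> bs k \<in> T \<Longrightarrow>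
      \<forall>k<n. R (as k) (as (Suc k)) \<and> R (bs k) (bs (Suc k)) \<Longrightarrow> as 0 = bs 0 \<Longrightarrow> as n = bs n \<Longrightarrow>
      \<forall>k\<le>n. lbl (as k) = lbl (bs k) \<Longrightarrow> \<forall>k\<le>n. as k = bs k"
  shows "no_graph_diamonds S adj_mat lbl_code"
  unfolding no_graph_diamonds_def
proof (intro notI, elim exE conjE)
  fix n as bs
  assume len: "length as = n + 1" "length bs = n + 1" and "as \<noteq> bs"
    and set: "set as \<subseteq> S" "set bs \<subseteq> S"
    and adj: "\<forall>i<n. adj_mat (as ! i) (as ! (i + 1)) = 1 \<and> adj_mat (bs ! i) (bs ! (i + 1)) = 1"
    and ends: "as ! 0 = bs ! 0" "as ! n = bs ! n"
    and lab: "\<forall>i\<le>n. lbl_code (as ! i) = lbl_code (bs ! i)"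
  have in_S: "as ! k \<in> S" "bs ! k \<in> S" if "k \<le> n" for k
    using set len that by (auto intro: nth_mem)
  have "\<forall>k\<le>n. dec (as ! k) = dec (bs ! k)"
  proof (rule unique)
    show "\<forall>k\<le>n. dec (as ! k) \<in> T \<and> dec (bs ! k) \<in> T" using in_S dec_in by blast
    show "\<forall>k<n. R (dec (as ! k)) (dec (as ! Suc k)) \<and> R (dec (bs ! k)) (dec (bs ! Suc k))"
      using adj by (auto simp: adj_mat_def split: if_splits)
    show "\<forall>k\<le>n. lbl (dec (as ! k)) = lbl (dec (bs ! k))" using lab by (simp add: lbl_code_def)
  qed (use ends in simp_all)
  then have "as ! k = bs ! k" if "k < length as" for k
    using that len in_S enc_dec by (metis Suc_eq_plus1 less_Suc_eq_le)
  then have "as = bs" using len by (simp add: nth_equalityI)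
  with \<open>as \<noteq> bs\<close> show False ..
qed

lemma L_inf_phiJA:
  assumes flip: "\<And>y. bi_walk T R y \<Longrightarrow> (\<lambda>i. lbl (inv (y (- i)))) = \<phi> (\<lambda>i. lbl (y i))"
    and y: "y \<in> XA S adj_mat"
  shows "L_inf lbl_code (phiJA S flip_mat y) = \<phi> (L_inf lbl_code y)"
proof -
  have walk: "bi_walk T R (\<lambda>i. dec (y i))" and yS: "\<And>i. y i \<in> S"
    using y unfolding mem_XA_iff by blast+
  have "L_inf lbl_code (phiJA S flip_mat y) = (\<lambda>i. lbl (inv (dec (y (- i)))))"
    using yS by (simp add: phiJA_flip_mat[OF y] L_inf_def lbl_code_def dec_inv_code)
  also have "\<dots> = \<phi> (\<lambda>i. lbl (dec (y i)))" using flip[OF walk] .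
  finally show ?thesis by (simp add: L_inf_def lbl_code_def)
qed

lemma funpow_shift_comp: "(shift ^^ n) (\<lambda>i. f (z i)) = (\<lambda>i. f ((shift ^^ n) z i))"
  by (induction n) (simp_all add: shift_def)

lemma XA_fixed_point:
  assumes y: "bi_walk T R y" and fixed: "(shift ^^ \<delta>) (\<lambda>i. inv (y (- i))) = y"
  shows "(shift ^^ \<delta>) (phiJA S flip_mat (\<lambda>i. enc (y i))) = (\<lambda>i. enc (y i))"
proof -
  have "phiJA S flip_mat (\<lambda>i. enc (y i)) = (\<lambda>i. enc (inv (y (- i))))"
    using y by (simp add: phiJA_flip_mat enc_bi_walk_in_XA inv_code_def bi_walk_def)
  moreover have "(shift ^^ \<delta>) (\<lambda>i. enc ((\<lambda>i. inv (y (- i))) i)) =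
      (\<lambda>i. enc ((shift ^^ \<delta>) (\<lambda>i. inv (y (- i))) i))"
    by (rule funpow_shift_comp)
  ultimately show ?thesis using fixed by simp
qed

end

section \<open>The state graph of a sofic shift with a flip\<close>

record ('v, 'b) state =
  win :: "int \<Rightarrow> 'b"
  flip_win :: "int \<Rightarrow> 'b"
  past :: "'v set"
  future :: "'v set"
  flip_past :: "'v set"
  flip_future :: "'v set"

definition state_label :: "('v, 'b) state \<Rightarrow> 'b" where
  "state_label a = win a 0"

definition flip_state :: "('v, 'b) state \<Rightarrow> ('v, 'b) state" where
  "flip_state a = \<lparr>win = flip_win a, flip_win = win a, past = flip_past a, future = flip_future a,
     flip_past = past a, flip_future = future a\<rparr>"

lemma flip_state_flip_state [simp]: "flip_state (flip_state a) = a"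
  by (simp add: flip_state_def)

locale sofic_flip =
  fixes E :: "'e set" and ini ter :: "'e \<Rightarrow> 'v" and lab :: "'e \<Rightarrow> 'b"
    and X :: "(int \<Rightarrow> 'b) set" and \<phi> :: "(int \<Rightarrow> 'b) \<Rightarrow> (int \<Rightarrow> 'b)" and N :: nat
  assumes finite_E: "finite E"
    and X_def: "X = {(\<lambda>i. lab (p i)) | p. \<forall>i. p i \<in> E \<and> ter (p i) = ini (p (i + 1))}"
    and phi_in_X: "\<And>x. x \<in> X \<Longrightarrow> \<phi> x \<in> X"
    and phi_phi: "\<And>x. x \<in> X \<Longrightarrow> \<phi> (\<phi> x) = x"
    and phi_shift: "\<And>x. x \<in> X \<Longrightarrow> \<phi> (shift x) = shift_inv (\<phi> x)"
    and phi_window: "\<And>x z. x \<in> X \<Longrightarrow> z \<in> X \<Longrightarrow> (\<forall>t. \<bar>t\<bar> \<le> int N \<longrightarrow> x t = z t) \<Longrightarrow> \<phi> x 0 = \<phi> z 0"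
begin

definition past_vertices :: "int \<Rightarrow> (int \<Rightarrow> 'b) \<Rightarrow> 'v set" where
  "past_vertices j x = {v. \<exists>p. (\<forall>i<j. p i \<in> E \<and> lab (p i) = x i) \<and>
     (\<forall>i<j - 1. ter (p i) = ini (p (i + 1))) \<and> ter (p (j - 1)) = v}"

definition future_vertices :: "int \<Rightarrow> (int \<Rightarrow> 'b) \<Rightarrow> 'v set" where
  "future_vertices j x = {v. \<exists>p. (\<forall>i\<ge>j. p i \<in> E \<and> lab (p i) = x i \<and> ter (p i) = ini (p (i + 1))) \<and>
     ini (p j) = v}"

definition succ_vertices :: "'v set \<Rightarrow> 'b \<Rightarrow> 'v set" where
  "succ_vertices P a = {ter e | e. e \<in> E \<and> ini e \<in> P \<and> lab e = a}"

definition pred_vertices :: "'v set \<Rightarrow> 'b \<Rightarrow> 'v set" where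
  "pred_vertices R a = {ini e | e. e \<in> E \<and> lab e = a \<and> ter e \<in> R}"

text \<open>Restricting to the window makes the set of possible windows finite; outside it the
  value is the junk constant \<open>undefined\<close>.\<close>
definition window :: "(int \<Rightarrow> 'b) \<Rightarrow> int \<Rightarrow> int \<Rightarrow> 'b" where
  "window z k = restrict (\<lambda>t. z (k + t)) {- int N .. int N}"

lemma window_eq: "\<bar>t\<bar> \<le> int N \<Longrightarrow> window z k t = z (k + t)"
  by (simp add: window_def abs_le_iff)

lemma window_undefined: "\<not> \<bar>t\<bar> \<le> int N \<Longrightarrow> window z k t = undefined"
  by (auto simp add: window_def abs_le_iff)

lemma past_vertices_succ: "past_vertices (j + 1) x = succ_vertices (past_vertices j x) (x j)"
proof
  show "past_vertices (j + 1) x \<subseteq> succ_vertices (past_vertices j x) (x j)"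
  proof
    fix v assume "v \<in> past_vertices (j + 1) x"
    then obtain p where p: "\<forall>i<j + 1. p i \<in> E \<and> lab (p i) = x i" "\<forall>i<j. ter (p i) = ini (p (i + 1))"
      "ter (p j) = v" unfolding past_vertices_def by auto
    have "ini (p j) \<in> past_vertices j x" unfolding past_vertices_def
      using p by (intro CollectI exI[of _ p]) (auto dest: spec[of _ "j - 1"])
    then show "v \<in> succ_vertices (past_vertices j x) (x j)" unfolding succ_vertices_def using p by auto
  qed
next
  show "succ_vertices (past_vertices j x) (x j) \<subseteq> past_vertices (j + 1) x"
  proof
    fix v assume "v \<in> succ_vertices (past_vertices j x) (x j)"
    then obtain e p where e: "e \<in> E" "lab e = x j" "v = ter e"
      and p: "\<forall>i<j. p i \<in> E \<and> lab (p i) = x i" "\<forall>i<j - 1. ter (p i) = ini (p (i + 1))" "ter (p (j - 1)) = ini e"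
      unfolding succ_vertices_def past_vertices_def by auto
    define p' where "p' = p(j := e)"
    have "\<forall>i<j + 1. p' i \<in> E \<and> lab (p' i) = x i" using p e by (auto simp: p'_def)
    moreover have "\<forall>i<j. ter (p' i) = ini (p' (i + 1))"
    proof (intro allI impI)
      fix i assume "i < j"
      then show "ter (p' i) = ini (p' (i + 1))"
        using p by (cases "i = j - 1") (auto simp: p'_def)
    qed
    moreover have "ter (p' j) = v" using e by (simp add: p'_def)
    ultimately show "v \<in> past_vertices (j + 1) x" unfolding past_vertices_def by auto
  qed
qed

lemma future_vertices_pred: "future_vertices j x = pred_vertices (future_vertices (j + 1) x) (x j)"
proof
  show "future_vertices j x \<subseteq> pred_vertices (future_vertices (j + 1) x) (x j)"
  proof
    fix v assume "v \<in> future_vertices j x"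
    then obtain p where p: "\<forall>i\<ge>j. p i \<in> E \<and> lab (p i) = x i \<and> ter (p i) = ini (p (i + 1))" "ini (p j) = v"
      unfolding future_vertices_def by auto
    have "ter (p j) \<in> future_vertices (j + 1) x" unfolding future_vertices_def
      using p by (intro CollectI exI[of _ p]) auto
    then show "v \<in> pred_vertices (future_vertices (j + 1) x) (x j)" unfolding pred_vertices_def using p by (auto intro!: exI[of _ "p j"])
  qed
next
  show "pred_vertices (future_vertices (j + 1) x) (x j) \<subseteq> future_vertices j x"
  proof
    fix v assume "v \<in> pred_vertices (future_vertices (j + 1) x) (x j)"
    then obtain e p where e: "e \<in> E" "lab e = x j" "v = ini e"
      and p: "\<forall>i\<ge>j + 1. p i \<in> E \<and> lab (p i) = x i \<and> ter (p i) = ini (p (i + 1))" "ini (p (j + 1)) = ter e"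
      unfolding pred_vertices_def future_vertices_def by auto
    define p' where "p' = p(j := e)"
    have "\<forall>i\<ge>j. p' i \<in> E \<and> lab (p' i) = x i \<and> ter (p' i) = ini (p' (i + 1))"
    proof (intro allI impI)
      fix i assume "j \<le> i"
      then show "p' i \<in> E \<and> lab (p' i) = x i \<and> ter (p' i) = ini (p' (i + 1))"
        using p e by (cases "i = j") (auto simp: p'_def)
    qed
    moreover have "ini (p' j) = v" using e by (simp add: p'_def)
    ultimately show "v \<in> future_vertices j x" unfolding future_vertices_def by auto
  qed
qed

lemma past_vertices_shift: "past_vertices j (\<lambda>i. x (i + c)) = past_vertices (j + c) x"
proof
  show "past_vertices j (\<lambda>i. x (i + c)) \<subseteq> past_vertices (j + c) x"
  proof
    fix v assume "v \<in> past_vertices j (\<lambda>i. x (i + c))"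
    then obtain p where p: "\<forall>i<j. p i \<in> E \<and> lab (p i) = x (i + c)" "\<forall>i<j - 1. ter (p i) = ini (p (i + 1))"
      "ter (p (j - 1)) = v" unfolding past_vertices_def by auto
    show "v \<in> past_vertices (j + c) x" unfolding past_vertices_def
    proof (intro CollectI exI[of _ "\<lambda>i. p (i - c)"] conjI allI impI)
      fix i assume "i < j + c" then show "p (i - c) \<in> E" "lab (p (i - c)) = x i" using p(1)[rule_format, of "i - c"] by auto
    next
      fix i assume "i < j + c - 1" then show "ter (p (i - c)) = ini (p (i + 1 - c))"
        using p(2)[rule_format, of "i - c"] by (simp add: algebra_simps)
    next
      show "ter (p (j + c - 1 - c)) = v" using p(3) by simp
    qed
  qed
next
  show "past_vertices (j + c) x \<subseteq> past_vertices j (\<lambda>i. x (i + c))"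
  proof
    fix v assume "v \<in> past_vertices (j + c) x"
    then obtain p where p: "\<forall>i<j + c. p i \<in> E \<and> lab (p i) = x i" "\<forall>i<j + c - 1. ter (p i) = ini (p (i + 1))"
      "ter (p (j + c - 1)) = v" unfolding past_vertices_def by auto
    show "v \<in> past_vertices j (\<lambda>i. x (i + c))" unfolding past_vertices_def
    proof (intro CollectI exI[of _ "\<lambda>i. p (i + c)"] conjI allI impI)
      fix i assume "i < j" then show "p (i + c) \<in> E" "lab (p (i + c)) = x (i + c)" using p(1)[rule_format, of "i + c"] by auto
    next
      fix i assume "i < j - 1" then show "ter (p (i + c)) = ini (p (i + 1 + c))"
        using p(2)[rule_format, of "i + c"] by (simp add: algebra_simps)
    next
      show "ter (p (j - 1 + c)) = v" using p(3) by (simp add: algebra_simps)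
    qed
  qed
qed

lemma future_vertices_shift: "future_vertices j (\<lambda>i. x (i + c)) = future_vertices (j + c) x"
proof
  show "future_vertices j (\<lambda>i. x (i + c)) \<subseteq> future_vertices (j + c) x"
  proof
    fix v assume "v \<in> future_vertices j (\<lambda>i. x (i + c))"
    then obtain p where p: "\<forall>i\<ge>j. p i \<in> E \<and> lab (p i) = x (i + c) \<and> ter (p i) = ini (p (i + 1))"
      "ini (p j) = v" unfolding future_vertices_def by auto
    show "v \<in> future_vertices (j + c) x" unfolding future_vertices_def
    proof (intro CollectI exI[of _ "\<lambda>i. p (i - c)"] conjI allI impI)
      fix i assume "j + c \<le> i" then show "p (i - c) \<in> E" "lab (p (i - c)) = x i" "ter (p (i - c)) = ini (p (i + 1 - c))"
        using p(1)[rule_format, of "i - c"] by (auto simp: algebra_simps)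
    next
      show "ini (p (j + c - c)) = v" using p(2) by simp
    qed
  qed
next
  show "future_vertices (j + c) x \<subseteq> future_vertices j (\<lambda>i. x (i + c))"
  proof
    fix v assume "v \<in> future_vertices (j + c) x"
    then obtain p where p: "\<forall>i\<ge>j + c. p i \<in> E \<and> lab (p i) = x i \<and> ter (p i) = ini (p (i + 1))"
      "ini (p (j + c)) = v" unfolding future_vertices_def by auto
    show "v \<in> future_vertices j (\<lambda>i. x (i + c))" unfolding future_vertices_def
    proof (intro CollectI exI[of _ "\<lambda>i. p (i + c)"] conjI allI impI)
      fix i assume "j \<le> i" then show "p (i + c) \<in> E" "lab (p (i + c)) = x (i + c)" "ter (p (i + c)) = ini (p (i + 1 + c))"
        using p(1)[rule_format, of "i + c"] by (auto simp: algebra_simps)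
    next
      show "ini (p (j + c)) = v" using p(2) by simp
    qed
  qed
qed

lemma X_walk_exists: "x \<in> X \<Longrightarrow> \<exists>p. (\<forall>i. p i \<in> E \<and> ter (p i) = ini (p (i + 1))) \<and> x = (\<lambda>i. lab (p i))"
  using X_def by auto

lemma walk_labels_in_X: "\<forall>i. p i \<in> E \<and> ter (p i) = ini (p (i + 1)) \<Longrightarrow> (\<lambda>i. lab (p i)) \<in> X"
  using X_def by auto

lemma past_future_vertices_meet: "x \<in> X \<Longrightarrow> past_vertices j x \<inter> future_vertices j x \<noteq> {}"
proof -
  assume "x \<in> X"
  then obtain p where p: "\<forall>i. p i \<in> E \<and> ter (p i) = ini (p (i + 1))" "x = (\<lambda>i. lab (p i))"
    using X_walk_exists by blast
  have "ini (p j) \<in> past_vertices j x" unfolding past_vertices_def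
    using p by (intro CollectI exI[of _ p]) (auto dest: spec[of _ "j - 1"])
  moreover have "ini (p j) \<in> future_vertices j x" unfolding future_vertices_def
    using p by (intro CollectI exI[of _ p]) auto
  ultimately show ?thesis by blast
qed

lemma shift_by_in_X: "x \<in> X \<Longrightarrow> (\<lambda>i. x (i + c)) \<in> X"
proof -
  assume "x \<in> X"
  then obtain p where p: "\<forall>i. p i \<in> E \<and> ter (p i) = ini (p (i + 1))" "x = (\<lambda>i. lab (p i))"
    using X_walk_exists by blast
  have "\<forall>i. p (i + c) \<in> E \<and> ter (p (i + c)) = ini (p (i + 1 + c))"
    using p(1) by (metis add.commute add.left_commute)
  then have "(\<lambda>i. lab (p (i + c))) \<in> X" using walk_labels_in_X[of "\<lambda>i. p (i + c)"] by simp
  then show ?thesis using p(2) by simp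
qed

lemma phi_shift_by_nat: "x \<in> X \<Longrightarrow> \<phi> (\<lambda>i. x (i + int n)) k = \<phi> x (k - int n)"
proof (induction n arbitrary: k)
  case 0 then show ?case by simp
next
  case (Suc n)
  have eq: "(\<lambda>i. x (i + int (Suc n))) = shift (\<lambda>i. x (i + int n))"
    by (simp add: shift_def algebra_simps)
  have "\<phi> (\<lambda>i. x (i + int (Suc n))) k = shift_inv (\<phi> (\<lambda>i. x (i + int n))) k"
    unfolding eq using phi_shift shift_by_in_X Suc.prems by metis
  also have "\<dots> = \<phi> x (k - int (Suc n))" using Suc by (simp add: shift_inv_def algebra_simps)
  finally show ?case .
qed

lemma phi_shift_by: "x \<in> X \<Longrightarrow> \<phi> (\<lambda>i. x (i + c)) k = \<phi> x (k - c)"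
proof (cases "0 \<le> c")
  case True
  assume x: "x \<in> X"
  then show ?thesis using phi_shift_by_nat[OF x, of "nat c"] True by simp
next
  case False
  assume x: "x \<in> X"
  define n where "n = nat (- c)"
  have c: "c = - int n" using False by (simp add: n_def)
  define z where "z = (\<lambda>i. x (i + c))"
  have zX: "z \<in> X" unfolding z_def using shift_by_in_X[OF x] .
  have "x = (\<lambda>i. z (i + int n))" by (simp add: z_def c)
  then have "\<phi> x (k + int n) = \<phi> z k" using phi_shift_by_nat[OF zX, of n "k + int n"] by simp
  then show ?thesis by (simp add: z_def c)
qed

lemma phi_local:
  assumes "x \<in> X" "z \<in> X" "\<forall>t. \<bar>t\<bar> \<le> int N \<longrightarrow> x (j + t) = z (j' + t)"
  shows "\<phi> x (-j) = \<phi> z (-j')"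
proof -
  have "\<phi> (\<lambda>i. x (i + j)) 0 = \<phi> (\<lambda>i. z (i + j')) 0"
    using phi_window[OF shift_by_in_X[OF assms(1)] shift_by_in_X[OF assms(2)]] assms(3) by (metis add.commute)
  then show ?thesis using phi_shift_by[OF assms(1)] phi_shift_by[OF assms(2)] by simp
qed

text \<open>The window of \<open>\<phi> x\<close> is taken around \<open>-j\<close> because \<open>\<phi>\<close> reverses time.\<close>
definition state_at :: "(int \<Rightarrow> 'b) \<Rightarrow> int \<Rightarrow> ('v, 'b) state" where
  "state_at x j = \<lparr>win = window x j, flip_win = window (\<phi> x) (- j),
     past = past_vertices j x, future = future_vertices j x,
     flip_past = past_vertices (- j) (\<phi> x), flip_future = future_vertices (- j) (\<phi> x)\<rparr>"

definition states :: "('v, 'b) state set" where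
  "states = {state_at x j | x j. x \<in> X}"

definition step :: "('v, 'b) state \<Rightarrow> ('v, 'b) state \<Rightarrow> bool" where
  "step a b \<longleftrightarrow> (\<exists>x\<in>X. \<exists>j. a = state_at x j \<and> b = state_at x (j + 1))"

lemma state_at_sel [simp]:
  "win (state_at x j) = window x j" "flip_win (state_at x j) = window (\<phi> x) (- j)"
  "past (state_at x j) = past_vertices j x" "future (state_at x j) = future_vertices j x"
  "flip_past (state_at x j) = past_vertices (- j) (\<phi> x)"
  "flip_future (state_at x j) = future_vertices (- j) (\<phi> x)"
  by (simp_all add: state_at_def)

lemma state_label_state_at [simp]: "state_label (state_at x j) = x j"
  by (simp add: state_label_def window_eq)

lemma finite_states: "finite states"
proof -
  let ?W = "PiE {- int N .. int N} (\<lambda>_. lab ` E)"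
  let ?S = "?W \<times> ?W \<times> Pow (ter ` E) \<times> Pow (ini ` E) \<times> Pow (ter ` E) \<times> Pow (ini ` E)"
  let ?mk = "\<lambda>(w, w', P, R, P', R'). \<lparr>win = w, flip_win = w', past = P, future = R,
     flip_past = P', flip_future = R'\<rparr> :: ('v, 'b) state"
  have window_in: "window x j \<in> ?W" if "x \<in> X" for x j
    using that X_walk_exists unfolding window_def by (fastforce simp: restrict_PiE_iff)
  have past_sub: "past_vertices j x \<subseteq> ter ` E" for j x
    unfolding past_vertices_def by (auto dest!: spec[of _ "j - 1"])
  have future_sub: "future_vertices j x \<subseteq> ini ` E" for j x
    unfolding future_vertices_def by auto
  have "states \<subseteq> ?mk ` ?S"
  proof
    fix a assume "a \<in> states"
    then obtain x j where x: "x \<in> X" and a: "a = state_at x j" unfolding states_def by blast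
    let ?t = "(window x j, window (\<phi> x) (- j), past_vertices j x, future_vertices j x,
      past_vertices (- j) (\<phi> x), future_vertices (- j) (\<phi> x))"
    have "?t \<in> ?S" using window_in[OF x] window_in[OF phi_in_X[OF x]] past_sub future_sub by simp
    moreover have "a = ?mk ?t" by (simp add: a state_at_def)
    ultimately show "a \<in> ?mk ` ?S" by (rule rev_image_eqI)
  qed
  moreover have "finite ?S"
    using finite_E by (intro finite_cartesian_product finite_PiE) auto
  ultimately show ?thesis by (metis finite_surj)
qed

lemma flip_state_at: "x \<in> X \<Longrightarrow> flip_state (state_at x j) = state_at (\<phi> x) (- j)"
  by (simp add: flip_state_def state_at_def phi_phi)

lemma flip_state_in_states: "a \<in> states \<Longrightarrow> flip_state a \<in> states"
  unfolding states_def using flip_state_at phi_in_X by blast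

lemma step_flip_state: "step a b \<Longrightarrow> step (flip_state b) (flip_state a)"
proof -
  assume "step a b"
  then obtain x j where x: "x \<in> X" "a = state_at x j" "b = state_at x (j + 1)"
    unfolding step_def by blast
  have "flip_state b = state_at (\<phi> x) (- (j + 1))" "flip_state a = state_at (\<phi> x) (- (j + 1) + 1)"
    using x flip_state_at by simp_all
  then show ?thesis unfolding step_def using phi_in_X[OF x(1)] by blast
qed

lemma window_shift: "window (\<lambda>i. z (i + c)) k = window z (k + c)"
  unfolding window_def by (intro ext) (simp add: restrict_def ac_simps)

lemma state_at_shift: "x \<in> X \<Longrightarrow> state_at (shift x) j = state_at x (j + 1)"
proof -
  assume x: "x \<in> X"
  have phi: "\<phi> (shift x) = (\<lambda>i. \<phi> x (i + - 1))" using phi_shift[OF x] by (simp add: shift_inv_def)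
  have "shift x = (\<lambda>i. x (i + 1))" by (simp add: shift_def)
  moreover have "- j + - 1 = - (j + 1)" by simp
  ultimately show ?thesis
    unfolding state_at_def phi by (simp only: window_shift past_vertices_shift future_vertices_shift)
qed

lemma step_obtain:
  assumes "step a b"
  obtains x j where "x \<in> X" "a = state_at x j" "b = state_at x (j + 1)"
  using assms unfolding step_def by blast

lemma step_win:
  assumes "step a b" "\<bar>t\<bar> \<le> int N" "\<bar>t + 1\<bar> \<le> int N"
  shows "win b t = win a (t + 1)"
proof -
  obtain x j where "a = state_at x j" "b = state_at x (j + 1)" using assms(1) by (rule step_obtain)
  moreover have "j + 1 + t = j + (t + 1)" by simp
  ultimately show ?thesis using assms(2,3) by (simp add: window_eq algebra_simps)
qed

lemma step_flip_win:
  assumes "step a b" "\<bar>t\<bar> \<le> int N" "\<bar>t - 1\<bar> \<le> int N"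
  shows "flip_win b t = flip_win a (t - 1)"
proof -
  obtain x j where "a = state_at x j" "b = state_at x (j + 1)" using assms(1) by (rule step_obtain)
  moreover have "- (j + 1) + t = - j + (t - 1)" by simp
  ultimately show ?thesis using assms(2,3) by (simp add: window_eq algebra_simps)
qed

lemma step_past:
  assumes "step a b" shows "past b = succ_vertices (past a) (state_label a)"
proof -
  obtain x j where ab: "a = state_at x j" "b = state_at x (j + 1)" using assms by (rule step_obtain)
  show ?thesis unfolding ab state_at_sel state_label_state_at by (rule past_vertices_succ)
qed

lemma step_future:
  assumes "step a b" shows "future a = pred_vertices (future b) (state_label a)"
proof -
  obtain x j where ab: "a = state_at x j" "b = state_at x (j + 1)" using assms by (rule step_obtain)
  show ?thesis unfolding ab state_at_sel state_label_state_at by (rule future_vertices_pred)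
qed

lemma step_flip_past: "step a b \<Longrightarrow> flip_past a = succ_vertices (flip_past b) (flip_win b 0)"
proof -
  assume "step a b"
  then obtain x j where x: "a = state_at x j" "b = state_at x (j + 1)" by (rule step_obtain)
  have "past_vertices (- j) (\<phi> x) = succ_vertices (past_vertices (- (j + 1)) (\<phi> x)) (\<phi> x (- (j + 1)))"
    using past_vertices_succ[of "- (j + 1)" "\<phi> x"] by simp
  then show ?thesis using x by (simp add: window_eq)
qed

lemma step_flip_future: "step a b \<Longrightarrow> flip_future b = pred_vertices (flip_future a) (flip_win b 0)"
proof -
  assume "step a b"
  then obtain x j where x: "a = state_at x j" "b = state_at x (j + 1)" by (rule step_obtain)
  have "future_vertices (- (j + 1)) (\<phi> x) = pred_vertices (future_vertices (- j) (\<phi> x)) (\<phi> x (- (j + 1)))"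
    using future_vertices_pred[of "- (j + 1)" "\<phi> x"] by simp
  then show ?thesis using x by (simp add: window_eq)
qed

lemma states_flip_win_center:
  assumes "a \<in> states" "a' \<in> states" "win a = win a'"
  shows "flip_win a 0 = flip_win a' 0"
proof -
  obtain x j x' j' where x: "x \<in> X" "a = state_at x j" "x' \<in> X" "a' = state_at x' j'"
    using assms(1,2) unfolding states_def by blast
  have "x (j + t) = x' (j' + t)" if "\<bar>t\<bar> \<le> int N" for t
    using fun_cong[OF assms(3), of t] x that by (simp add: window_eq)
  then have "\<phi> x (- j) = \<phi> x' (- j')" using phi_local x by blast
  then show ?thesis using x by (simp add: window_eq)
qed

lemma states_window_undefined:
  "a \<in> states \<Longrightarrow> \<not> \<bar>t\<bar> \<le> int N \<Longrightarrow> win a t = undefined \<and> flip_win a t = undefined"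
  unfolding states_def by (auto simp: window_undefined)

lemma states_past_future_meet: "a \<in> states \<Longrightarrow> past a \<inter> future a \<noteq> {}"
  unfolding states_def using past_future_vertices_meet by auto

lemma bi_walk_state_at: "x \<in> X \<Longrightarrow> bi_walk states step (state_at x)"
  unfolding bi_walk_def states_def step_def by blast

text \<open>Along a walk of states the sets \<open>past \<inter> future\<close> form a chain of old vertices to which
  \<open>biinfinite_chain\<close> applies; its steps are edges of the old graph with the right labels.\<close>
lemma bi_walk_labels_in_X:
  assumes y: "bi_walk states step y"
  shows "(\<lambda>i. state_label (y i)) \<in> X"
proof -
  define C where "C i = past (y i) \<inter> future (y i)" for i
  define R where "R i u v \<longleftrightarrow> (\<exists>e\<in>E. ini e = u \<and> ter e = v \<and> lab e = state_label (y i))" for i u v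
  have step_i: "step (y i) (y (i + 1))" for i using y unfolding bi_walk_def by blast
  have fw: "\<exists>v\<in>C (i + 1). R i u v" if "u \<in> C i" for i u
  proof -
    have "u \<in> pred_vertices (future (y (i + 1))) (state_label (y i))"
      using that step_future[OF step_i[of i]] unfolding C_def by auto
    then obtain e where e: "e \<in> E" "lab e = state_label (y i)" "ter e \<in> future (y (i + 1))" "u = ini e"
      unfolding pred_vertices_def by auto
    have "ter e \<in> succ_vertices (past (y i)) (state_label (y i))"
      unfolding succ_vertices_def using e that C_def by auto
    then have "ter e \<in> past (y (i + 1))" using step_past[OF step_i[of i]] by simp
    then show ?thesis using e unfolding C_def R_def by auto
  qed
  have bw: "\<exists>u\<in>C i. R i u v" if "v \<in> C (i + 1)" for i v
  proof -
    have "v \<in> succ_vertices (past (y i)) (state_label (y i))"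
      using that step_past[OF step_i[of i]] unfolding C_def by auto
    then obtain e where e: "e \<in> E" "lab e = state_label (y i)" "ini e \<in> past (y i)" "v = ter e"
      unfolding succ_vertices_def by auto
    have "ini e \<in> pred_vertices (future (y (i + 1))) (state_label (y i))"
      unfolding pred_vertices_def using e that C_def by auto
    then have "ini e \<in> future (y i)" using step_future[OF step_i[of i]] by simp
    then show ?thesis using e unfolding C_def R_def by auto
  qed
  have "C 0 \<noteq> {}" unfolding C_def using states_past_future_meet y bi_walk_def by blast
  then obtain w where w: "\<forall>i. w i \<in> C i \<and> R i (w i) (w (i + 1))"
    using biinfinite_chain[of C R, OF fw bw] by blast
  define q where "q i = (SOME e. e \<in> E \<and> ini e = w i \<and> ter e = w (i + 1) \<and> lab e = state_label (y i))" for i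
  have q: "q i \<in> E \<and> ini (q i) = w i \<and> ter (q i) = w (i + 1) \<and> lab (q i) = state_label (y i)" for i
  proof -
    have "\<exists>e. e \<in> E \<and> ini e = w i \<and> ter e = w (i + 1) \<and> lab e = state_label (y i)"
      using w R_def by blast
    then show ?thesis unfolding q_def by (rule someI_ex)
  qed
  have "(\<lambda>i. lab (q i)) \<in> X" using q by (intro walk_labels_in_X) auto
  then show ?thesis using q by simp
qed

lemma bi_walk_labels_image: "{(\<lambda>i. state_label (y i)) | y. bi_walk states step y} = X"
proof
  show "{(\<lambda>i. state_label (y i)) | y. bi_walk states step y} \<subseteq> X"
    using bi_walk_labels_in_X by blast
  show "X \<subseteq> {(\<lambda>i. state_label (y i)) | y. bi_walk states step y}"
  proof
    fix x assume x: "x \<in> X"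
    have "x = (\<lambda>i. state_label (state_at x i))" by simp
    then show "x \<in> {(\<lambda>i. state_label (y i)) | y. bi_walk states step y}"
      using bi_walk_state_at[OF x] by blast
  qed
qed

lemma bi_walk_win:
  assumes y: "bi_walk states step y" and t: "\<bar>t\<bar> \<le> int N"
  shows "win (y m) t = state_label (y (m + t))"
proof -
  have adj: "win (y k) (s + 1) = win (y (k + 1)) s" if "\<bar>s\<bar> \<le> int N" "\<bar>s + 1\<bar> \<le> int N" for k s
  proof -
    have "step (y k) (y (k + 1))" using y unfolding bi_walk_def by blast
    from step_win[OF this that] show ?thesis by simp
  qed
  have up: "win (y k) (int n) = win (y (k + int n)) 0" if "int n \<le> int N" for n k
    using that
  proof (induction n arbitrary: k)
    case (Suc n)
    have "win (y k) (int n + 1) = win (y (k + 1)) (int n)" using adj[of "int n" k] Suc.prems by simp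
    also have "\<dots> = win (y (k + 1 + int n)) 0" using Suc by simp
    finally show ?case by (simp add: ac_simps)
  qed simp
  have down: "win (y k) (- int n) = win (y (k - int n)) 0" if "int n \<le> int N" for n k
    using that
  proof (induction n arbitrary: k)
    case (Suc n)
    have "win (y k) (- int n - 1) = win (y (k - 1)) (- int n)"
      using adj[of "- int n - 1" "k - 1"] Suc.prems by simp
    also have "\<dots> = win (y (k - 1 - int n)) 0" using Suc by simp
    finally have "win (y k) (- int n - 1) = win (y (k - 1 - int n)) 0" .
    moreover have "- int (Suc n) = - int n - 1" "k - 1 - int n = k - int (Suc n)" by simp_all
    ultimately show ?case by (simp only:)
  qed simp
  show ?thesis
  proof (cases "0 \<le> t")
    case True
    then show ?thesis using up[of "nat t" m] t by (simp add: state_label_def)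
  next
    case False
    then show ?thesis using down[of "nat (- t)" m] t by (simp add: state_label_def)
  qed
qed

lemma bi_walk_flip:
  assumes y: "bi_walk states step y"
  shows "(\<lambda>i. state_label (flip_state (y (- i)))) = \<phi> (\<lambda>i. state_label (y i))"
proof
  fix i
  let ?x' = "\<lambda>i. state_label (y i)"
  obtain x j where x: "x \<in> X" "y (- i) = state_at x j"
    using y unfolding bi_walk_def states_def by blast
  have "x (j + t) = ?x' (- i + t)" if t: "\<bar>t\<bar> \<le> int N" for t
  proof -
    have "x (j + t) = win (y (- i)) t" using x t by (simp add: window_eq)
    also have "\<dots> = ?x' (- i + t)" using bi_walk_win[OF y t] by simp
    finally show ?thesis .
  qed
  then have "\<phi> x (- j) = \<phi> ?x' (- (- i))"
    using phi_local[OF x(1) bi_walk_labels_in_X[OF y]] by blast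
  moreover have "state_label (flip_state (y (- i))) = \<phi> x (- j)"
    using x by (simp add: flip_state_at)
  ultimately show "state_label (flip_state (y (- i))) = \<phi> ?x' i" by simp
qed

lemma fixed_point_lift:
  assumes "\<delta> \<in> {0, 1::nat}" "x \<in> X" "(shift ^^ \<delta>) (\<phi> x) = x"
  shows "\<exists>y. bi_walk states step y \<and> (\<lambda>i. state_label (y i)) = x \<and>
    (shift ^^ \<delta>) (\<lambda>i. flip_state (y (- i))) = y"
proof (intro exI conjI)
  show "bi_walk states step (state_at x)" using bi_walk_state_at[OF assms(2)] .
  show "(\<lambda>i. state_label (state_at x i)) = x" by simp
  show "(shift ^^ \<delta>) (\<lambda>i. flip_state (state_at x (- i))) = state_at x"
  proof (cases "\<delta> = 0")
    case True
    then have "\<phi> x = x" using assms by simp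
    then show ?thesis using True flip_state_at[OF assms(2)] by simp
  next
    case False
    then have d: "\<delta> = 1" using assms by simp
    then have sx: "shift (\<phi> x) = x" using assms by simp
    show ?thesis
    proof
      fix i
      have "(shift ^^ \<delta>) (\<lambda>i. flip_state (state_at x (- i))) i = flip_state (state_at x (- (i + 1)))"
        using d by (simp add: shift_def)
      also have "\<dots> = state_at (\<phi> x) (i + 1)"
        using flip_state_at[OF assms(2), of "- (i + 1)"] by (simp add: add.commute)
      also have "\<dots> = state_at (shift (\<phi> x)) i"
        using state_at_shift[OF phi_in_X[OF assms(2)], of i] by (rule sym)
      finally show "(shift ^^ \<delta>) (\<lambda>i. flip_state (state_at x (- i))) i = state_at x i"
        using sx by simp
    qed
  qed
qed

definition parallel_walks ::
  "nat \<Rightarrow> (nat \<Rightarrow> ('v, 'b) state) \<Rightarrow> (nat \<Rightarrow> ('v, 'b) state) \<Rightarrow> bool" where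
  "parallel_walks n as bs \<longleftrightarrow>
     (\<forall>k\<le>n. as k \<in> states \<and> bs k \<in> states) \<and>
     (\<forall>k<n. step (as k) (as (Suc k)) \<and> step (bs k) (bs (Suc k))) \<and>
     as 0 = bs 0 \<and> as n = bs n \<and> (\<forall>k\<le>n. state_label (as k) = state_label (bs k))"

lemma parallel_walks_win:
  assumes pw: "parallel_walks n as bs" and k: "k \<le> n"
  shows "win (as k) = win (bs k)"
proof
  fix t
  have steps: "step (as k) (as (Suc k))" "step (bs k) (bs (Suc k))" if "k < n" for k
    using pw that unfolding parallel_walks_def by auto
  show "win (as k) t = win (bs k) t"
  proof (cases "\<bar>t\<bar> \<le> int N")
    case True
    show ?thesis
    proof (rule sliding_windows_eq[where g="\<lambda>k. win (as k)" and h="\<lambda>k. win (bs k)" and M="int N" and n=n])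
      show "win (as (Suc k)) t = win (as k) (t + 1)" "win (bs (Suc k)) t = win (bs k) (t + 1)"
        if "k < n" "\<bar>t\<bar> \<le> int N" "\<bar>t + 1\<bar> \<le> int N" for k t
        using step_win[OF steps(1)[OF that(1)] that(2,3)] step_win[OF steps(2)[OF that(1)] that(2,3)] by simp_all
      show "win (as k) 0 = win (bs k) 0" if "k \<le> n" for k
        using pw that unfolding parallel_walks_def state_label_def by simp
    qed (use pw k True in \<open>simp_all add: parallel_walks_def\<close>)
  next
    case False
    then show ?thesis
      using pw k states_window_undefined unfolding parallel_walks_def by simp
  qed
qed

text \<open>The centre of each \<open>\<phi>\<close>-window is determined by the (already equal) window; the
  \<open>\<phi>\<close>-windows then slide in the opposite direction.\<close>
lemma parallel_walks_flip_win:
  assumes pw: "parallel_walks n as bs" and k: "k \<le> n"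
  shows "flip_win (as k) = flip_win (bs k)"
proof
  fix t
  have steps: "step (as k) (as (Suc k))" "step (bs k) (bs (Suc k))" if "k < n" for k
    using pw that unfolding parallel_walks_def by auto
  have slide: "flip_win (cs (Suc k)) (- t) = flip_win (cs k) (- (t + 1))"
    if "step (cs k) (cs (Suc k))" "\<bar>t\<bar> \<le> int N" "\<bar>t + 1\<bar> \<le> int N" for cs k t
    using step_flip_win[OF that(1), of "- t"] that(2,3) by simp
  show "flip_win (as k) t = flip_win (bs k) t"
  proof (cases "\<bar>t\<bar> \<le> int N")
    case True
    have "flip_win (as k) (- (- t)) = flip_win (bs k) (- (- t))"
    proof (rule sliding_windows_eq[where g="\<lambda>k t. flip_win (as k) (- t)"
          and h="\<lambda>k t. flip_win (bs k) (- t)" and M="int N" and n=n])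
      show "flip_win (as (Suc k)) (- t) = flip_win (as k) (- (t + 1))"
        "flip_win (bs (Suc k)) (- t) = flip_win (bs k) (- (t + 1))"
        if "k < n" "\<bar>t\<bar> \<le> int N" "\<bar>t + 1\<bar> \<le> int N" for k t
        using slide[OF steps(1)[OF that(1)] that(2,3)] slide[OF steps(2)[OF that(1)] that(2,3)]
        by simp_all
      show "flip_win (as k) (- 0) = flip_win (bs k) (- 0)" if "k \<le> n" for k
        using states_flip_win_center parallel_walks_win[OF pw that] pw that
        unfolding parallel_walks_def by simp
    qed (use pw k True in \<open>simp_all add: parallel_walks_def\<close>)
    then show ?thesis by simp
  next
    case False
    then show ?thesis
      using pw k states_window_undefined unfolding parallel_walks_def by simp
  qed
qed

lemma parallel_walks_past:
  assumes pw: "parallel_walks n as bs" and k: "k \<le> n"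
  shows "past (as k) = past (bs k)"
proof (rule forward_recurrence_eq[where F="\<lambda>k P. succ_vertices P (state_label (as k))"])
  show "past (as (Suc j)) = succ_vertices (past (as j)) (state_label (as j))"
    "past (bs (Suc j)) = succ_vertices (past (bs j)) (state_label (as j))" if "j < n" for j
    using pw that step_past unfolding parallel_walks_def by (metis less_imp_le)+
qed (use pw k in \<open>simp_all add: parallel_walks_def\<close>)

lemma parallel_walks_future:
  assumes pw: "parallel_walks n as bs" and k: "k \<le> n"
  shows "future (as k) = future (bs k)"
proof (rule backward_recurrence_eq[where G="\<lambda>k R. pred_vertices R (state_label (as k))"])
  show "future (as j) = pred_vertices (future (as (Suc j))) (state_label (as j))"
    "future (bs j) = pred_vertices (future (bs (Suc j))) (state_label (as j))" if "j < n" for j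
    using pw that step_future unfolding parallel_walks_def by (metis less_imp_le)+
qed (use pw k in \<open>simp_all add: parallel_walks_def\<close>)

lemma parallel_walks_flip_past:
  assumes pw: "parallel_walks n as bs" and k: "k \<le> n"
  shows "flip_past (as k) = flip_past (bs k)"
proof (rule backward_recurrence_eq[where G="\<lambda>k P. succ_vertices P (flip_win (as (Suc k)) 0)"])
  show "flip_past (as j) = succ_vertices (flip_past (as (Suc j))) (flip_win (as (Suc j)) 0)"
    "flip_past (bs j) = succ_vertices (flip_past (bs (Suc j))) (flip_win (as (Suc j)) 0)"
    if "j < n" for j
    using pw that step_flip_past parallel_walks_flip_win[OF pw, of "Suc j"]
    unfolding parallel_walks_def by (metis Suc_leI)+
qed (use pw k in \<open>simp_all add: parallel_walks_def\<close>)

lemma parallel_walks_flip_future: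
  assumes pw: "parallel_walks n as bs" and k: "k \<le> n"
  shows "flip_future (as k) = flip_future (bs k)"
proof (rule forward_recurrence_eq[where F="\<lambda>k R. pred_vertices R (flip_win (as (Suc k)) 0)"])
  show "flip_future (as (Suc j)) = pred_vertices (flip_future (as j)) (flip_win (as (Suc j)) 0)"
    "flip_future (bs (Suc j)) = pred_vertices (flip_future (bs j)) (flip_win (as (Suc j)) 0)"
    if "j < n" for j
    using pw that step_flip_future parallel_walks_flip_win[OF pw, of "Suc j"]
    unfolding parallel_walks_def by (metis Suc_leI)+
qed (use pw k in \<open>simp_all add: parallel_walks_def\<close>)

lemma parallel_walks_eq: "parallel_walks n as bs \<Longrightarrow> \<forall>k\<le>n. as k = bs k"
  by (intro allI impI state.equality) (simp_all add: parallel_walks_win parallel_walks_flip_win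
      parallel_walks_past parallel_walks_future parallel_walks_flip_past parallel_walks_flip_future)

lemma state_label_in_B1: "a \<in> states \<Longrightarrow> state_label a \<in> B1 X"
  unfolding states_def B1_def by auto

theorem matrix_presentation:
  "\<exists>(S::nat set) (L::nat \<Rightarrow> 'b) (A::nat \<Rightarrow> nat \<Rightarrow> nat) (J::nat \<Rightarrow> nat \<Rightarrow> nat).
    finite S \<and> L ` S \<subseteq> B1 X \<and> zero_one_mat S A \<and> zero_one_mat S J \<and>
    L_inf L ` XA S A = X \<and>
    no_graph_diamonds S A L \<and>
    mat_eq S (mat_mult S J A) (mat_mult S (mat_transpose A) J) \<and>
    mat_eq S (mat_mult S J J) mat_id \<and>
    (\<forall>y\<in>XA S A. L_inf L (phiJA S J y) = \<phi> (L_inf L y)) \<and>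
    (\<forall>\<delta>::nat\<in>{0,1}. \<forall>x\<in>X. (shift ^^ \<delta>) (\<phi> x) = x \<longrightarrow>
        (\<exists>y\<in>XA S A. L_inf L y = x \<and> (shift ^^ \<delta>) (phiJA S J y) = y))"
proof -
  interpret G: finite_flip_graph states step flip_state state_label
    using finite_states flip_state_in_states step_flip_state
    by unfold_locales auto
  have lifts: "\<exists>y\<in>XA G.S G.adj_mat. L_inf G.lbl_code y = x \<and> (shift ^^ \<delta>) (phiJA G.S G.flip_mat y) = y"
    if fixed: "\<delta> \<in> {0, 1}" "x \<in> X" "(shift ^^ \<delta>) (\<phi> x) = x" for \<delta> x
  proof -
    obtain y where "bi_walk states step y" "(\<lambda>i. state_label (y i)) = x"
      "(shift ^^ \<delta>) (\<lambda>i. flip_state (y (- i))) = y"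
      using fixed_point_lift[OF fixed] by blast
    then show ?thesis using G.enc_bi_walk_in_XA G.L_inf_enc G.XA_fixed_point by metis
  qed
  show ?thesis
  proof (intro exI conjI ballI impI)
    show "finite G.S" by (rule G.finite_S)
    show "G.lbl_code ` G.S \<subseteq> B1 X"
      using G.dec_in state_label_in_B1 by (auto simp: G.lbl_code_def)
    show "L_inf G.lbl_code ` XA G.S G.adj_mat = X"
      unfolding G.L_inf_image by (rule bi_walk_labels_image)
    show "no_graph_diamonds G.S G.adj_mat G.lbl_code"
      by (rule G.no_graph_diamonds_code, rule parallel_walks_eq) (simp add: parallel_walks_def)
    show "L_inf G.lbl_code (phiJA G.S G.flip_mat y) = \<phi> (L_inf G.lbl_code y)"
      if "y \<in> XA G.S G.adj_mat" for y
      using G.L_inf_phiJA[OF bi_walk_flip that] .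
    show "\<exists>y\<in>XA G.S G.adj_mat. L_inf G.lbl_code y = x \<and> (shift ^^ \<delta>) (phiJA G.S G.flip_mat y) = y"
      if "\<delta> \<in> {0, 1}" "x \<in> X" "(shift ^^ \<delta>) (\<phi> x) = x" for \<delta> x
      using lifts[OF that] .
  qed (rule G.zero_one_adj_mat G.zero_one_flip_mat G.flip_mat_adj_mat G.flip_mat_square)+
qed

end

lemma sofic_flip_exists:
  fixes X :: "(int \<Rightarrow> 'b) set" and \<phi> :: "(int \<Rightarrow> 'b) \<Rightarrow> (int \<Rightarrow> 'b)"
  assumes "sofic X" and "is_flip X \<phi>"
  shows "\<exists>(E::nat set) (ini::nat \<Rightarrow> nat) (ter::nat \<Rightarrow> nat) (lab::nat \<Rightarrow> 'b) N.
    sofic_flip E ini ter lab X \<phi> N"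
proof -
  obtain E :: "nat set" and ini ter :: "nat \<Rightarrow> nat" and lab :: "nat \<Rightarrow> 'b" where
    E: "finite E" and X: "X = {(\<lambda>i. lab (p i)) | p. \<forall>i. p i \<in> E \<and> ter (p i) = ini (p (i + 1))}"
    using assms(1) unfolding sofic_def by (elim exE conjE)
  have hom: "homeomorphic_map (subtopology shift_top X) (subtopology shift_top X) \<phi>"
    and flip: "\<forall>x\<in>X. \<phi> (shift x) = shift_inv (\<phi> x)" "\<forall>x\<in>X. \<phi> (\<phi> x) = x"
    using assms(2) unfolding is_flip_def by blast+
  have "\<phi> ` X = X"
    using homeomorphic_imp_surjective_map[OF hom] by (simp add: shift_top_def)
  have "compactin shift_top X"
    unfolding X using E by (rule compactin_walk_labels)
  moreover have "continuous_map (subtopology shift_top X) shift_top \<phi>"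
    using homeomorphic_imp_continuous_map[OF hom] continuous_map_in_subtopology by blast
  ultimately obtain N where N:
    "\<forall>x\<in>X. \<forall>z\<in>X. (\<forall>t. \<bar>t\<bar> \<le> int N \<longrightarrow> x t = z t) \<longrightarrow> \<phi> x 0 = \<phi> z 0"
    by (blast dest: continuous_map_coordinate_window)
  have "sofic_flip E ini ter lab X \<phi> N"
  proof
    show "finite E" by (fact E)
    show "X = {(\<lambda>i. lab (p i)) | p. \<forall>i. p i \<in> E \<and> ter (p i) = ini (p (i + 1))}" by (fact X)
    show "\<phi> x \<in> X" if "x \<in> X" for x using that \<open>\<phi> ` X = X\<close> by blast
    show "\<phi> (\<phi> x) = x" "\<phi> (shift x) = shift_inv (\<phi> x)" if "x \<in> X" for x using that flip by simp_all
    show "\<phi> x 0 = \<phi> z 0" if "x \<in> X" "z \<in> X" "\<forall>t. \<bar>t\<bar> \<le> int N \<longrightarrow> x t = z t" for x z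
      using that N by blast
  qed
  then show ?thesis by blast
qed

theorem proposition2p1:
  fixes X :: "(int \<Rightarrow> 'b) set" and \<phi> :: "(int \<Rightarrow> 'b) \<Rightarrow> (int \<Rightarrow> 'b)"
  assumes "sofic X" and "is_flip X \<phi>"
  shows "\<exists>(S::nat set) (L::nat \<Rightarrow> 'b) (A::nat \<Rightarrow> nat \<Rightarrow> nat) (J::nat \<Rightarrow> nat \<Rightarrow> nat).
    finite S \<and> L ` S \<subseteq> B1 X \<and> zero_one_mat S A \<and> zero_one_mat S J \<and>
    L_inf L ` XA S A = X \<and>
    no_graph_diamonds S A L \<and>
    mat_eq S (mat_mult S J A) (mat_mult S (mat_transpose A) J) \<and>
    mat_eq S (mat_mult S J J) mat_id \<and>
    (\<forall>y\<in>XA S A. L_inf L (phiJA S J y) = \<phi> (L_inf L y)) \<and>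
    (\<forall>\<delta>::nat\<in>{0,1}. \<forall>x\<in>X. (shift ^^ \<delta>) (\<phi> x) = x \<longrightarrow>
        (\<exists>y\<in>XA S A. L_inf L y = x \<and> (shift ^^ \<delta>) (phiJA S J y) = y))"
proof -
  obtain E :: "nat set" and ini ter :: "nat \<Rightarrow> nat" and lab :: "nat \<Rightarrow> 'b" and N
    where "sofic_flip E ini ter lab X \<phi> N"
    using sofic_flip_exists[OF assms] by blast
  then show ?thesis by (rule sofic_flip.matrix_presentation)
qed

end
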